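(* Let $T_1=(Q_1,\Sigma,\Delta,R_1,q_1^0)$ and $T_2=(Q_2,\Delta,\Omega,R_2,q_2^0)$ be top-down tree transducers, let $A$ be the domain automaton of $T_2$, and let $\hat{T}_1$ be the product construction of $T_1$ and $A$. If a state $(q,S)$ of $\hat{T}_1$ produces a tree $t\in T_\Delta$ on some input $s\in T_\Sigma$ and $S\neq\emptyset$, then $t\in\bigcap_{q_2\in S}\text{dom}(q_2)$.
   Context: A top-down tree transducer $T=(Q,\Sigma,\Delta,R,q_0)$ has finite state set $Q$, ranked input/output alphabets $\Sigma,\Delta$, initial state $q_0$, and finite rule set $R$ of rules $q(a(x_1,\dots,x_k))\to t$ with $a\in\Sigma_k$ ($\Sigma_k$ = symbols of rank $k$) and $t$ a tree over $\Delta$ whose leaves may additionally be of the form $q'(x_i)$, $q'\in Q$, $i\in[k]$; rules are used as rewrite rules in the usual way. A state $q$ produces $t$ on input $s$ if the tree $t$ over $\Delta$ is derivable from $q(s)$; $\text{dom}(q)$ is the set of inputs on which $q$ produces some tree. For $q\in Q$, $a\in\Sigma_k$, $\text{rhs}_T(q,a)$ is the set of right-hand sides of rules with left-hand side $q(a(x_1,\dots,x_k))$; for a set $\Gamma$ of right-hand sides, $\Gamma[x_i]$ is the set of $q'\in Q$ with $q'(x_i)$ occurring in some tree of $\Gamma$. Domain automaton of $T$: the top-down tree automaton (transducer over $\Sigma$ with rules of the form $p(a(x_1,\dots,x_k))\to a(p_1(x_1),\dots,p_k(x_k))$) with states all subsets of $Q$, initial state $\{q_0\}$, rules $S(a(x_1,\dots,x_k))\to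 a(S_1(x_1),\dots,S_k(x_k))$ for every $a\in\Sigma_k$, nonempty $S=\{q_1,\dots,q_n\}\subseteq Q$ and nonempty $\Gamma_j\subseteq\text{rhs}_T(q_j,a)$ ($j\in[n]$), where $S_i=\bigcup_j\Gamma_j[x_i]$, and rules $\emptyset(a(x_1,\dots,x_k))\to a(\emptyset(x_1),\dots,\emptyset(x_k))$ for all $a$. Product construction of transducers $T=(Q,\Sigma,\Delta,R,q_0)$ and $T'=(Q',\Delta,\Omega,R',q'_0)$: the transducer with states $Q\times Q'$, input $\Sigma$, output $\Omega$, initial state $(q_0,q'_0)$, and, for every rule $q(a(x_1,\dots,x_k))\to\xi$ of $T$, every $p\in Q'$ and every tree $\zeta$ derivable from $p(\xi)$ using rules of $T'$ in which the leaves of $\xi$ of the form $q''(x_i)$ are treated as unrewritable symbols and a state $p'$ applied to such a leaf stays as $p'(q''(x_i))$ (so $\zeta$ is a tree over $\Omega$ with leaves possibly of the form $p'(q''(x_i))$), the rule $(q,p)(a(x_1,\dots,x_k))\to\zeta'$, where $\zeta'$ is obtained from $\zeta$ by replacing each $p'(q''(x_i))$ by $(q'',p')(x_i)$. *)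

theory Defs
  imports Main
begin

datatype 'f tree = Node 'f "'f tree list"

datatype ('f, 'v) "term" = Var 'v | Fun 'f "('f, 'v) term list"

fun wf_tree :: "('f \<times> nat) set \<Rightarrow> 'f tree \<Rightarrow> bool" where
  "wf_tree \<Sigma> (Node f ts) = ((f, length ts) \<in> \<Sigma> \<and> (\<forall>t\<in>set ts. wf_tree \<Sigma> t))"

definition trees :: "('f \<times> nat) set \<Rightarrow> 'f tree set" where
  "trees \<Sigma> = {t. wf_tree \<Sigma> t}"

fun tterm :: "'f tree \<Rightarrow> ('f, 'v) term" where
  "tterm (Node f ts) = Fun f (map tterm ts)"

fun vars_term :: "('f, 'v) term \<Rightarrow> 'v set" where
  "vars_term (Var v) = {v}"
| "vars_term (Fun f ts) = (\<Union>t\<in>set ts. vars_term t)"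

fun subst :: "('v \<Rightarrow> ('f, 'w) term) \<Rightarrow> ('f, 'v) term \<Rightarrow> ('f, 'w) term" where
  "subst \<sigma> (Var v) = \<sigma> v"
| "subst \<sigma> (Fun f ts) = Fun f (map (subst \<sigma>) ts)"

fun wf_term :: "('f \<times> nat) set \<Rightarrow> 'v set \<Rightarrow> ('f, 'v) term \<Rightarrow> bool" where
  "wf_term \<Sigma> V (Var v) = (v \<in> V)"
| "wf_term \<Sigma> V (Fun f ts) = ((f, length ts) \<in> \<Sigma> \<and> (\<forall>t\<in>set ts. wf_term \<Sigma> V t))"

text \<open>A rule (q, (a,k), \<xi>) stands for q(a(x_1,...,x_k)) \<rightarrow> \<xi>; in \<xi> the leaf
Var (q', i) stands for q'(x_{i+1}), i.e. variables are indexed from 0 (i < k).\<close>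

record ('q, 'f, 'g) tdtt =
  states :: "'q set"
  inp :: "('f \<times> nat) set"
  out :: "('g \<times> nat) set"
  rules :: "('q \<times> ('f \<times> nat) \<times> ('g, 'q \<times> nat) term) set"
  init :: 'q

definition wf_tdtt :: "('q, 'f, 'g) tdtt \<Rightarrow> bool" where
  "wf_tdtt T \<longleftrightarrow> finite (states T) \<and> finite (inp T) \<and> finite (out T) \<and> finite (rules T)
     \<and> init T \<in> states T
     \<and> (\<forall>(q, (a, k), \<xi>) \<in> rules T. q \<in> states T \<and> (a, k) \<in> inp T
            \<and> wf_term (out T) (states T \<times> {..<k}) \<xi>)"

definition rhs :: "('q, 'f, 'g) tdtt \<Rightarrow> 'q \<Rightarrow> 'f \<times> nat \<Rightarrow> ('g, 'q \<times> nat) term set" where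
  "rhs T q ak = {\<xi>. (q, ak, \<xi>) \<in> rules T}"

text \<open>\<Gamma>[x_i]: the states applied to x_i in some tree of \<Gamma> (0-based index i).\<close>
definition states_at :: "('g, 'q \<times> nat) term set \<Rightarrow> nat \<Rightarrow> 'q set" where
  "states_at \<Gamma> i = {q'. \<exists>\<xi>\<in>\<Gamma>. (q', i) \<in> vars_term \<xi>}"

text \<open>A sentential form is an output term
whose leaves may be of the form q(u) (represented by Var (q, u)), u an input term
(possibly containing unrewritable leaves of type 'v).\<close>

definition inst :: "('f, 'v) term list \<Rightarrow> ('g, 'q \<times> nat) term \<Rightarrow> ('g, 'q \<times> ('f, 'v) term) term" where
  "inst ss \<xi> = subst (\<lambda>(q', i). Var (q', ss ! i)) \<xi>"

inductive_set step :: "('q, 'f, 'g) tdtt \<Rightarrow> (('g, 'q \<times> ('f, 'v) term) term \<times> ('g, 'q \<times> ('f, 'v) term) term) set"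
  for T where
  root: "(q, (a, length ss), \<xi>) \<in> rules T \<Longrightarrow> (Var (q, Fun a ss), inst ss \<xi>) \<in> step T"
| ctxt: "(u, u') \<in> step T \<Longrightarrow> (Fun f (ls @ u # rs), Fun f (ls @ u' # rs)) \<in> step T"

definition produces :: "('q, 'f, 'g) tdtt \<Rightarrow> 'q \<Rightarrow> 'f tree \<Rightarrow> 'g tree \<Rightarrow> bool" where
  "produces T q s t \<longleftrightarrow> t \<in> trees (out T) \<and>
     (Var (q, tterm s :: ('f, unit) term), tterm t) \<in> (step T)\<^sup>*"

definition dom_st :: "('q, 'f, 'g) tdtt \<Rightarrow> 'q \<Rightarrow> 'f tree set" where
  "dom_st T q = {s \<in> trees (inp T). \<exists>t. produces T q s t}"

definition domaut :: "('q, 'f, 'g) tdtt \<Rightarrow> ('q set, 'f, 'f) tdtt" where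
  "domaut T = \<lparr> states = Pow (states T), inp = inp T, out = inp T,
     rules =
       {(S, (a, k), Fun a (map (\<lambda>i. Var (\<Union>q\<in>S. states_at (\<Gamma> q) i, i)) [0..<k])) | S a k \<Gamma>.
          (a, k) \<in> inp T \<and> S \<subseteq> states T \<and> S \<noteq> {} \<and>
          (\<forall>q\<in>S. \<Gamma> q \<noteq> {} \<and> \<Gamma> q \<subseteq> rhs T q (a, k))}
       \<union> {({}, (a, k), Fun a (map (\<lambda>i. Var ({}, i)) [0..<k])) | a k. (a, k) \<in> inp T},
     init = {init T} \<rparr>"

definition fold_leaf :: "'p \<times> ('g, 'q \<times> nat) term \<Rightarrow> ('h, ('q \<times> 'p) \<times> nat) term" where
  "fold_leaf x = (case x of (p', Var (q'', i)) \<Rightarrow> Var ((q'', p'), i) | _ \<Rightarrow> undefined)"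

definition product :: "('q, 'f, 'g) tdtt \<Rightarrow> ('p, 'g, 'h) tdtt \<Rightarrow> ('q \<times> 'p, 'f, 'h) tdtt" where
  "product T T' = \<lparr> states = states T \<times> states T', inp = inp T, out = out T',
     rules =
       {((q, p), (a, k), subst fold_leaf \<zeta>) | q p a k \<xi> \<zeta>.
          (q, (a, k), \<xi>) \<in> rules T \<and> p \<in> states T' \<and>
          (Var (p, \<xi>), \<zeta>) \<in> (step T')\<^sup>* \<and>
          (\<forall>x\<in>vars_term \<zeta>. \<exists>p' q'' i. x = (p', Var (q'', i)))},
     init = (init T, init T') \<rparr>"

end

theory Submission
  imports Defs
begin

text \<open>Read derivations backwards. Call a tree t good for a set S of states of T2 if every
state of S produces some output on t. A rule S(a(x_1,...,x_k)) \<rightarrow> a(S_1(x_1),...,S_k(x_k)) of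
the domain automaton picks right-hand sides of T2 for all states of S, and S_i collects the states
they apply to x_i; so if every t_i is good for S_i, these T2 rules assemble outputs of all states
of S on a(t_1,...,t_k). Hence goodness propagates from the leaves of a sentential form to its
root along derivations of the domain automaton, and so along derivations of the product, whose
rules are such derivations on right-hand sides of T1.\<close>

fun matches :: "('q \<Rightarrow> 'g tree \<Rightarrow> bool) \<Rightarrow> ('g, 'q \<times> 'x) term \<Rightarrow> 'g tree \<Rightarrow> bool" where
  "matches P (Var (q, x)) t = P q t"
| "matches P (Fun f us) (Node g ts) = (f = g \<and> list_all2 (matches P) us ts)"

definition rules_reflect :: "('q, 'f, 'g) tdtt \<Rightarrow> ('q \<Rightarrow> 'g tree \<Rightarrow> bool) \<Rightarrow> bool" where
  "rules_reflect U P \<longleftrightarrow> (\<forall>(p, ak, \<xi>) \<in> rules U. \<forall>t. matches P \<xi> t \<longrightarrow> P p t)"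

lemma matches_tterm: "matches P (tterm t) t"
  by (induction t) (auto simp: list_all2_conv_all_nth)

lemma matches_inst: "matches P (inst ss \<xi>) t = matches P \<xi> t"
proof (induction \<xi> arbitrary: t)
  case (Var x)
  then show ?case by (cases x) (simp add: inst_def)
next
  case (Fun f us)
  then show ?case
    by (cases t) (auto simp: inst_def list_all2_conv_all_nth)
qed

lemma matches_step_backward:
  assumes "rules_reflect U P" and "(u, v) \<in> step U" and "matches P v t"
  shows "matches P u t"
  using assms(2,3)
proof (induction u v arbitrary: t rule: step.induct)
  case (root q a ss \<xi>)
  then show ?case
    using assms(1) by (auto simp: rules_reflect_def matches_inst)
next
  case (ctxt u u' f ls rs)
  then obtain ts1 t0 ts2 where "t = Node f (ts1 @ t0 # ts2)" "list_all2 (matches P) ls ts1"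
      "matches P u' t0" "list_all2 (matches P) rs ts2"
    by (cases t) (auto simp: list_all2_append1 list_all2_Cons1)
  with ctxt.IH show ?case
    by (simp add: list_all2_appendI)
qed

lemma matches_steps_backward:
  assumes "rules_reflect U P" and "(u, v) \<in> (step U)\<^sup>*" and "matches P v t"
  shows "matches P u t"
  using assms(2,3)
  by (induction rule: converse_rtrancl_induct) (auto intro: matches_step_backward[OF assms(1)])

lemma steps_ctxt:
  "(u, v) \<in> (step U)\<^sup>* \<Longrightarrow> (Fun f (ls @ u # rs), Fun f (ls @ v # rs)) \<in> (step U)\<^sup>*"
  by (induction rule: rtrancl_induct) (auto intro: rtrancl_into_rtrancl step.ctxt)

lemma steps_Fun_args:
  assumes "list_all2 (\<lambda>u v. (u, v) \<in> (step U)\<^sup>*) us vs"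
  shows "(Fun f (ls @ us), Fun f (ls @ vs)) \<in> (step U)\<^sup>*"
  using assms
proof (induction us vs arbitrary: ls rule: list_all2_induct)
  case (Cons u us v vs)
  have "(Fun f (ls @ u # us), Fun f (ls @ v # us)) \<in> (step U)\<^sup>*"
    using Cons.hyps(1) by (rule steps_ctxt)
  moreover have "(Fun f ((ls @ [v]) @ us), Fun f ((ls @ [v]) @ vs)) \<in> (step U)\<^sup>*"
    by (rule Cons.IH)
  ultimately show ?case by simp
qed simp

lemma steps_subst:
  assumes "\<forall>x \<in> vars_term \<xi>. (\<sigma> x, \<tau> x) \<in> (step U)\<^sup>*"
  shows "(subst \<sigma> \<xi>, subst \<tau> \<xi>) \<in> (step U)\<^sup>*"
  using assms
proof (induction \<xi>)
  case (Fun f us)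
  then have "list_all2 (\<lambda>u v. (u, v) \<in> (step U)\<^sup>*) (map (subst \<sigma>) us) (map (subst \<tau>) us)"
    by (auto simp: list_all2_conv_all_nth)
  then show ?case
    using steps_Fun_args[where ls = "[]"] by simp
qed simp

fun tsubst :: "('v \<Rightarrow> 'g tree) \<Rightarrow> ('g, 'v) term \<Rightarrow> 'g tree" where
  "tsubst \<sigma> (Var x) = \<sigma> x"
| "tsubst \<sigma> (Fun f ts) = Node f (map (tsubst \<sigma>) ts)"

lemma tterm_tsubst: "tterm (tsubst \<sigma> \<xi>) = subst (\<lambda>x. tterm (\<sigma> x)) \<xi>"
  by (induction \<xi>) auto

lemma wf_tree_tsubst:
  "wf_term \<Sigma> V \<xi> \<Longrightarrow> \<forall>x \<in> vars_term \<xi>. wf_tree \<Sigma> (\<sigma> x) \<Longrightarrow> wf_tree \<Sigma> (tsubst \<sigma> \<xi>)"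
  by (induction \<xi>) auto

lemma vars_term_subset: "wf_term \<Sigma> V \<xi> \<Longrightarrow> vars_term \<xi> \<subseteq> V"
  by (induction \<xi>) auto

lemma wf_tdtt_rule_rhs:
  "wf_tdtt T \<Longrightarrow> (q, (a, k), \<xi>) \<in> rules T \<Longrightarrow> wf_term (out T) (states T \<times> {..<k}) \<xi>"
  unfolding wf_tdtt_def by fastforce

lemma produces_by_rule:
  fixes T :: "('q, 'f, 'g) tdtt"
  assumes "wf_tdtt T" and rule: "(q, (a, length ts), \<xi>) \<in> rules T"
    and children: "\<forall>(q', i) \<in> vars_term \<xi>. produces T q' (ts ! i) (\<sigma> (q', i))"
  shows "produces T q (Node a ts) (tsubst \<sigma> \<xi>)"
proof -
  have wf_rhs: "wf_term (out T) (states T \<times> {..<length ts}) \<xi>"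
    using wf_tdtt_rule_rhs[OF assms(1) rule] .
  have "(Var (q, tterm (Node a ts) :: ('f, unit) term), inst (map tterm ts) \<xi>) \<in> step T"
    using step.root[of q a "map tterm ts" \<xi> T] rule by simp
  moreover have "(inst (map tterm ts :: ('f, unit) term list) \<xi>, tterm (tsubst \<sigma> \<xi>)) \<in> (step T)\<^sup>*"
    unfolding inst_def tterm_tsubst
  proof (intro steps_subst ballI, clarify)
    fix q' i assume var: "(q', i) \<in> vars_term \<xi>"
    then have "i < length ts"
      using vars_term_subset[OF wf_rhs] by auto
    with var children
    show "(Var (q', map tterm ts ! i :: ('f, unit) term), tterm (\<sigma> (q', i))) \<in> (step T)\<^sup>*"
      by (auto simp: produces_def)
  qed
  ultimately have "(Var (q, tterm (Node a ts) :: ('f, unit) term), tterm (tsubst \<sigma> \<xi>)) \<in> (step T)\<^sup>*"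
    by (rule converse_rtrancl_into_rtrancl)
  moreover have "tsubst \<sigma> \<xi> \<in> trees (out T)"
    using wf_tree_tsubst[OF wf_rhs] children by (fastforce simp: trees_def produces_def)
  ultimately show ?thesis
    by (simp add: produces_def)
qed

lemma ex_produces_by_rule:
  assumes "wf_tdtt T" and rule: "(q, (a, length ts), \<xi>) \<in> rules T"
    and children: "\<forall>(q', i) \<in> vars_term \<xi>. \<exists>t'. produces T q' (ts ! i) t'"
  shows "\<exists>t'. produces T q (Node a ts) t'"
proof -
  define \<sigma> where "\<sigma> = (\<lambda>(q', i). SOME t'. produces T q' (ts ! i) t')"
  from children have "\<forall>(q', i) \<in> vars_term \<xi>. produces T q' (ts ! i) (\<sigma> (q', i))"
    unfolding \<sigma>_def by (auto intro: someI_ex)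
  then have "produces T q (Node a ts) (tsubst \<sigma> \<xi>)"
    by (rule produces_by_rule[OF assms(1) rule])
  then show ?thesis ..
qed

definition all_produce :: "('q, 'f, 'g) tdtt \<Rightarrow> 'q set \<Rightarrow> 'f tree \<Rightarrow> bool" where
  "all_produce T S s \<longleftrightarrow> (\<forall>q \<in> S. \<exists>t. produces T q s t)"

lemma rules_reflect_domaut:
  assumes "wf_tdtt T"
  shows "rules_reflect (domaut T) (all_produce T)"
  unfolding rules_reflect_def
proof (clarify)
  fix S a k \<xi> t
  assume "(S, (a, k), \<xi>) \<in> rules (domaut T)" and match: "matches (all_produce T) \<xi> t"
  then consider "S = {}"
    | \<Gamma> where "\<forall>q \<in> S. \<Gamma> q \<noteq> {} \<and> \<Gamma> q \<subseteq> rhs T q (a, k)"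
        "\<xi> = Fun a (map (\<lambda>i. Var (\<Union>q \<in> S. states_at (\<Gamma> q) i, i)) [0..<k])"
    unfolding domaut_def by auto
  then show "all_produce T S t"
  proof cases
    case 1
    then show ?thesis by (simp add: all_produce_def)
  next
    case (2 \<Gamma>)
    obtain ts where t: "t = Node a ts" and len: "length ts = k"
      and children: "\<forall>i < k. all_produce T (\<Union>q \<in> S. states_at (\<Gamma> q) i) (ts ! i)"
      using match 2(2) by (cases t) (auto simp: list_all2_conv_all_nth)
    show ?thesis
      unfolding all_produce_def
    proof
      fix q assume "q \<in> S"
      with 2(1) obtain \<zeta> where "\<zeta> \<in> \<Gamma> q" and rule: "(q, (a, length ts), \<zeta>) \<in> rules T"
        using len by (auto simp: rhs_def)
      have "\<forall>(q', i) \<in> vars_term \<zeta>. \<exists>t'. produces T q' (ts ! i) t'"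
      proof (clarify)
        fix q' i assume var: "(q', i) \<in> vars_term \<zeta>"
        then have "i < k"
          using vars_term_subset[OF wf_tdtt_rule_rhs[OF assms rule]] len by auto
        moreover have "q' \<in> (\<Union>q \<in> S. states_at (\<Gamma> q) i)"
          using var \<open>\<zeta> \<in> \<Gamma> q\<close> \<open>q \<in> S\<close> unfolding states_at_def by blast
        ultimately show "\<exists>t'. produces T q' (ts ! i) t'"
          using children unfolding all_produce_def by blast
      qed
      then show "\<exists>t'. produces T q t t'"
        unfolding t by (rule ex_produces_by_rule[OF assms rule])
    qed
  qed
qed

lemma matches_subst_fold_leaf:
  assumes "\<forall>x \<in> vars_term \<zeta>. \<exists>p' q'' i. x = (p', Var (q'', i))"
  shows "matches (\<lambda>(q, p). P p) (subst fold_leaf \<zeta>) t = matches P \<zeta> t"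
  using assms
proof (induction \<zeta> arbitrary: t)
  case (Var x)
  then show ?case by (auto simp: fold_leaf_def)
next
  case (Fun f us)
  then show ?case by (cases t) (auto simp: list_all2_conv_all_nth)
qed

lemma rules_reflect_product:
  assumes "rules_reflect U P"
  shows "rules_reflect (product T U) (\<lambda>(q, p). P p)"
  unfolding rules_reflect_def
proof (clarify)
  fix q p ak \<eta> t
  assume "((q, p), ak, \<eta>) \<in> rules (product T U)" and match: "matches (\<lambda>(q, p). P p) \<eta> t"
  then obtain \<xi> \<zeta> where steps: "(Var (p, \<xi>), \<zeta>) \<in> (step U)\<^sup>*" and "\<eta> = subst fold_leaf \<zeta>"
    and "\<forall>x \<in> vars_term \<zeta>. \<exists>p' q'' i. x = (p', Var (q'', i))"
    unfolding product_def by auto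
  with match have "matches P \<zeta> t"
    by (simp add: matches_subst_fold_leaf)
  with steps have "matches P (Var (p, \<xi>)) t"
    by (rule matches_steps_backward[OF assms])
  then show "P p t" by simp
qed

theorem lemma2:
  fixes T1 :: "('q1, 'f, 'g) tdtt" and T2 :: "('q2, 'g, 'h) tdtt"
    and q :: 'q1 and S :: "'q2 set" and s :: "'f tree" and t :: "'g tree"
  assumes "wf_tdtt T1" and "wf_tdtt T2" and "inp T2 = out T1"
    and "(q, S) \<in> states (product T1 (domaut T2))"
    and "s \<in> trees (inp T1)" and "t \<in> trees (out T1)"
    and "produces (product T1 (domaut T2)) (q, S) s t"
    and "S \<noteq> {}"
  shows "t \<in> (\<Inter>q2\<in>S. dom_st T2 q2)"
proof -
  have "rules_reflect (product T1 (domaut T2)) (\<lambda>(q', S'). all_produce T2 S')"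
    using rules_reflect_product rules_reflect_domaut[OF assms(2)] .
  moreover have "(Var ((q, S), tterm s :: ('f, unit) term), tterm t) \<in> (step (product T1 (domaut T2)))\<^sup>*"
    using assms(7) by (simp add: produces_def)
  ultimately have "matches (\<lambda>(q', S'). all_produce T2 S') (Var ((q, S), tterm s :: ('f, unit) term)) t"
    using matches_tterm by (rule matches_steps_backward)
  then have "all_produce T2 S t" by simp
  then show ?thesis
    using assms(3,6) by (auto simp: dom_st_def all_produce_def)
qed

end
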